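(* Let $L>0$ and let $s\mapsto A(s)$, $s\in\mathbb{R}$, be an $L$-periodic $C^1$ family of complex symmetric $2\times 2$ matrices such that for every $s$, $A(s)A(s)^\dagger$ has eigenvalues $\lambda_1(s)^2>\lambda_2(s)^2>0$ ($\lambda_j>0$). Let $\mathbf{u}_1(s),\mathbf{u}_2(s)$ be $C^1$, $L$-periodic, orthonormal eigenvectors with $A A^\dagger\mathbf{u}_j=\lambda_j^2\mathbf{u}_j$, let $\tilde\lambda_j(s)=\mathbf{u}_j(s)^TA(s)^\dagger\mathbf{u}_j(s)$, and let $\gamma_j:\mathbb{R}\to\mathbb{R}$ be a $C^1$ function with $\tilde\lambda_j=\lambda_j e^{i\gamma_j}$. Define $\psi_{j,\pm}(s)=\frac{1}{\sqrt2}\begin{pmatrix}\pm e^{-i\gamma_j(s)}\mathbf{u}_j(s)\\ \overline{\mathbf{u}_j(s)}\end{pmatrix}$ and the Zak phase $\mathcal{Z}_j=i\int_0^L\langle\psi_{j,\pm}(s),\partial_s\psi_{j,\pm}(s)\rangle\,ds$ (inner product antilinear in the first slot). Then, for either choice of sign, $$\mathcal{Z}_j=\frac{\gamma_j(L)-\gamma_j(0)}{2}=\pi\,W(\tilde\lambda_j),$$ where $W(\tilde\lambda_j)\in\mathbb{Z}$ is the winding number about $0$ of the closed curve $s\mapsto\tilde\lambda_j(s)$, $s\in[0,L]$.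
   Context: $\overline{\cdot}$ denotes complex conjugation, $^T$ transpose, $^\dagger$ conjugate transpose. The winding number of a nonvanishing continuous $L$-periodic function $f:\mathbb{R}\to\mathbb{C}\setminus\{0\}$ is $(\arg f(L)-\arg f(0))/(2\pi)$ for a continuous branch of $\arg f$. *)

theory Defs
  imports "HOL-Analysis.Analysis"
begin

definition vconj :: "complex^'n \<Rightarrow> complex^'n" where
  "vconj x = (\<chi> i. cnj (x $ i))"

definition cadj :: "complex^'n^'m \<Rightarrow> complex^'m^'n" where
  "cadj M = (\<chi> i j. cnj (M $ j $ i))"

definition cinner :: "complex^'n \<Rightarrow> complex^'n \<Rightarrow> complex" where
  "cinner x y = (\<Sum>i\<in>UNIV. cnj (x $ i) * y $ i)"

definition tdot :: "complex^'n \<Rightarrow> complex^'n \<Rightarrow> complex" where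
  "tdot x y = (\<Sum>i\<in>UNIV. x $ i * y $ i)"

text \<open>Inner product on C^4 = C^2 (+) C^2 (vectors stacked as pairs).\<close>
definition cinner4 :: "(complex^2) \<times> (complex^2) \<Rightarrow> (complex^2) \<times> (complex^2) \<Rightarrow> complex" where
  "cinner4 x y = cinner (fst x) (fst y) + cinner (snd x) (snd y)"

definition winding_num :: "(real \<Rightarrow> complex) \<Rightarrow> real \<Rightarrow> real" where
  "winding_num f L = (THE w. \<exists>\<theta>. continuous_on {0..L} \<theta> \<and>
      (\<forall>s\<in>{0..L}. f s = complex_of_real (cmod (f s)) * cis (\<theta> s)) \<and>
      w = (\<theta> L - \<theta> 0) / (2 * pi))"

end

theory Submission
  imports Defs
begin

text \<open>Write \<psi> = (q u, c conj u) with q = \<plusminus>c e^(-i\<gamma>) and |q| = |c| = 1/\<surd>2.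
  The connection \<langle>\<psi>, \<psi>'\<rangle> splits into the phase term conj q q' = -i\<gamma>'/2 and
  |c|^2 (\<langle>u, u'\<rangle> + \<langle>conj u, conj u'\<rangle>) = 2|c|^2 Re \<langle>u, u'\<rangle>, which vanishes because u has
  unit length.  Integrating gives Zak = (\<gamma>(L) - \<gamma>(0))/2.  Since \<lambda> > 0, \<gamma> is a continuous
  argument of the closed curve lamt = \<lambda> e^(i\<gamma>); continuous arguments are unique up to a constant in
  2\<pi>\<int>, so the increment of \<gamma> is 2\<pi> times the winding number, an integer.\<close>

lemma has_vector_derivative_vec_lambda:
  fixes f :: "real \<Rightarrow> 'a::real_normed_vector ^'n"
  assumes "\<And>i. ((\<lambda>x. f x $ i) has_vector_derivative f' $ i) F"
  shows "(f has_vector_derivative f') F"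
  using assms unfolding has_vector_derivative_def has_derivative_def
  by (auto simp: bounded_linear_scaleR_left intro!: vec_tendstoI)

lemma has_vector_derivative_vec_nth:
  "(f has_vector_derivative f') F \<Longrightarrow> ((\<lambda>x. f x $ i) has_vector_derivative f' $ i) F"
  by (rule bounded_linear.has_vector_derivative[OF bounded_linear_vec_nth])

lemma has_vector_derivative_vector_scalar_mult:
  fixes p :: "real \<Rightarrow> complex" and v :: "real \<Rightarrow> complex^'n"
  assumes "(p has_vector_derivative p') (at s within S)" "(v has_vector_derivative v') (at s within S)"
  shows "((\<lambda>s. p s *s v s) has_vector_derivative (p' *s v s + p s *s v')) (at s within S)"
proof (rule has_vector_derivative_vec_lambda)
  fix i
  have "((\<lambda>s. p s * v s $ i) has_vector_derivative p s * v' $ i + p' * v s $ i) (at s within S)"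
    using has_vector_derivative_mult[OF assms(1) has_vector_derivative_vec_nth[OF assms(2)]] .
  then show "((\<lambda>s. (p s *s v s) $ i) has_vector_derivative (p' *s v s + p s *s v') $ i)
               (at s within S)"
    by (simp add: algebra_simps)
qed

lemma has_vector_derivative_vconj:
  fixes v :: "real \<Rightarrow> complex^'n"
  assumes "(v has_vector_derivative v') (at s within S)"
  shows "((\<lambda>s. vconj (v s)) has_vector_derivative vconj v') (at s within S)"
proof (rule has_vector_derivative_vec_lambda)
  fix i
  show "((\<lambda>s. vconj (v s) $ i) has_vector_derivative vconj v' $ i) (at s within S)"
    unfolding vconj_def vec_lambda_beta
    by (rule has_vector_derivative_cnj[OF has_vector_derivative_vec_nth[OF assms]])
qed

lemma has_vector_derivative_cinner:
  fixes u v :: "real \<Rightarrow> complex^'n"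
  assumes "(u has_vector_derivative u') (at s within S)" "(v has_vector_derivative v') (at s within S)"
  shows "((\<lambda>s. cinner (u s) (v s)) has_vector_derivative cinner u' (v s) + cinner (u s) v')
           (at s within S)"
  unfolding cinner_def sum.distrib[symmetric]
  by (rule has_vector_derivative_sum, rule has_vector_derivative_eq_rhs,
      rule has_vector_derivative_mult[OF has_vector_derivative_cnj
        [OF has_vector_derivative_vec_nth[OF assms(1)]] has_vector_derivative_vec_nth[OF assms(2)]])
     (simp add: algebra_simps)

lemma cinner_add_right: "cinner x (y + z) = cinner x y + cinner x z"
  by (simp add: cinner_def distrib_left sum.distrib)

lemma cinner_scalar_mult_left: "cinner (a *s x) y = cnj a * cinner x y"
  by (simp add: cinner_def sum_distrib_left mult.assoc)

lemma cinner_scalar_mult_right: "cinner x (a *s y) = a * cinner x y"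
  by (simp add: cinner_def sum_distrib_left algebra_simps)

lemma cinner_vconj: "cinner (vconj x) (vconj y) = cnj (cinner x y)"
  by (simp add: cinner_def vconj_def)

lemma cnj_cinner: "cnj (cinner x y) = cinner y x"
  by (simp add: cinner_def mult.commute)

lemma unit_curve_connection_imaginary:
  fixes u :: "real \<Rightarrow> complex^'n"
  assumes unit: "\<And>s. cinner (u s) (u s) = 1"
    and u': "(u has_vector_derivative u') (at s)"
  shows "cinner (u s) u' + cnj (cinner (u s) u') = 0"
proof -
  have "((\<lambda>s. cinner (u s) (u s)) has_vector_derivative cinner u' (u s) + cinner (u s) u') (at s)"
    using has_vector_derivative_cinner[OF u' u'] .
  moreover have "((\<lambda>s. cinner (u s) (u s)) has_vector_derivative 0) (at s)"
    by (simp add: unit)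
  ultimately have "cinner u' (u s) + cinner (u s) u' = 0"
    by (rule vector_derivative_unique_at)
  thus ?thesis by (metis cnj_cinner add.commute)
qed

lemma cinner4_doubled_state_connection:
  fixes u :: "real \<Rightarrow> complex^2" and q q' c :: complex
  assumes unit: "\<And>s. cinner (u s) (u s) = 1"
    and u': "(u has_vector_derivative u') (at s)"
    and same_weight: "cmod q = cmod c"
  shows "cinner4 (q *s u s, c *s vconj (u s)) (q' *s u s + q *s u', c *s vconj u') = cnj q * q'"
proof -
  define a where "a = cinner (u s) u'"
  have weight: "q * cnj q = c * cnj c"
    using same_weight by (metis complex_norm_square)
  have "cinner4 (q *s u s, c *s vconj (u s)) (q' *s u s + q *s u', c *s vconj u')
        = cnj q * q' + cnj c * c * (a + cnj a)"
    unfolding cinner4_def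
    by (simp add: cinner_add_right cinner_scalar_mult_left cinner_scalar_mult_right
        cinner_vconj unit weight a_def algebra_simps)
  also have "\<dots> = cnj q * q'"
    using unit_curve_connection_imaginary[OF unit u'] by (simp add: a_def)
  finally show ?thesis .
qed

lemma zak_phase_doubled_state:
  fixes u :: "real \<Rightarrow> complex^2" and g :: "real \<Rightarrow> real"
    and \<psi> :: "real \<Rightarrow> (complex^2) \<times> (complex^2)"
  assumes u_C1: "u C1_differentiable_on UNIV" and g_C1: "g C1_differentiable_on UNIV"
    and unit: "\<And>s. cinner (u s) (u s) = 1" and \<sigma>: "cmod \<sigma> = 1" and L: "0 \<le> L"
    and \<psi>: "\<And>s. \<psi> s =
        (complex_of_real (1 / sqrt 2) *s (\<sigma> * exp (- \<i> * complex_of_real (g s)) *s u s),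
         complex_of_real (1 / sqrt 2) *s vconj (u s))"
  shows "\<i> * integral {0..L} (\<lambda>s. cinner4 (\<psi> s) (vector_derivative \<psi> (at s)))
           = complex_of_real ((g L - g 0) / 2)"
proof -
  obtain u' where u': "\<And>s. (u has_vector_derivative u' s) (at s)"
    using u_C1 unfolding C1_differentiable_on_def by blast
  obtain g' where g': "\<And>s. (g has_vector_derivative g' s) (at s)"
    using g_C1 unfolding C1_differentiable_on_def by blast
  have g_deriv: "((\<lambda>s. complex_of_real (g s)) has_vector_derivative complex_of_real (g' s)) (at s)"
    for s
    using g'[of s] by (intro has_vector_derivative_of_real)
      (simp add: has_real_derivative_iff_has_vector_derivative)
  define c where "c = complex_of_real (1 / sqrt 2)"
  define q where "q = (\<lambda>s. c * \<sigma> * exp (- \<i> * complex_of_real (g s)))"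
  define q' where "q' = (\<lambda>s. - \<i> * complex_of_real (g' s) * q s)"
  have q_deriv: "(q has_vector_derivative q' s) (at s)" for s
  proof -
    have "((\<lambda>s. - \<i> * complex_of_real (g s)) has_vector_derivative - \<i> * complex_of_real (g' s))
            (at s)"
      using g_deriv by (rule has_vector_derivative_mult_right)
    from has_vector_derivative_mult_right[OF field_vector_diff_chain_at[OF this DERIV_exp],
        of "c * \<sigma>"]
    show ?thesis unfolding q_def q'_def by (simp add: o_def algebra_simps)
  qed
  have \<psi>_eq: "\<psi> = (\<lambda>s. (q s *s u s, c *s vconj (u s)))"
    by (simp add: fun_eq_iff \<psi> q_def c_def vector_smult_assoc mult.assoc)
  have "(\<psi> has_vector_derivative
          (q' s *s u s + q s *s u' s, 0 *s vconj (u s) + c *s vconj (u' s))) (at s)" for s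
    unfolding \<psi>_eq
    by (intro has_vector_derivative_Pair has_vector_derivative_vector_scalar_mult
        has_vector_derivative_vconj q_deriv u' has_vector_derivative_const)
  hence \<psi>_deriv: "vector_derivative \<psi> (at s) = (q' s *s u s + q s *s u' s, c *s vconj (u' s))"
    for s
    by (simp add: vector_derivative_at)
  have q_weight: "cmod (q s) = cmod c" for s
    using \<sigma> by (simp add: q_def norm_mult)
  have q_square_norm: "cnj (q s) * q s = 1 / 2" for s
  proof -
    have "cnj (q s) * q s = complex_of_real ((cmod c)\<^sup>2)"
      using q_weight[of s] by (metis complex_norm_square mult.commute)
    also have "\<dots> = 1 / 2"
      by (simp add: c_def norm_divide power_divide)
    finally show ?thesis .
  qed
  have connection: "\<i> * cinner4 (\<psi> s) (vector_derivative \<psi> (at s)) = complex_of_real (g' s) / 2"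
    for s
  proof -
    have "cinner4 (\<psi> s) (vector_derivative \<psi> (at s)) = cnj (q s) * q' s"
      unfolding \<psi>_deriv by (subst \<psi>_eq) (rule cinner4_doubled_state_connection[OF unit u' q_weight])
    also have "\<dots> = - \<i> * complex_of_real (g' s) * (cnj (q s) * q s)"
      by (simp add: q'_def)
    finally show ?thesis
      by (simp add: q_square_norm)
  qed
  have "((\<lambda>s. complex_of_real (g s) / 2) has_vector_derivative complex_of_real (g' s) / 2)
          (at s within {0..L})" for s
    by (rule has_vector_derivative_at_within) (intro has_vector_derivative_divide g_deriv)
  from fundamental_theorem_of_calculus[OF L this]
  have "integral {0..L} (\<lambda>s. \<i> * cinner4 (\<psi> s) (vector_derivative \<psi> (at s)))
          = complex_of_real (g L) / 2 - complex_of_real (g 0) / 2"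
    unfolding connection by (rule integral_unique)
  then show ?thesis
    by (simp add: diff_divide_distrib)
qed

lemma cis_eq_cis_imp_Ints:
  assumes "cis a = cis b"
  shows "(a - b) / (2 * pi) \<in> \<int>"
proof -
  have "exp (\<i> * complex_of_real a) = exp (\<i> * complex_of_real b)"
    using assms by (simp add: cis_conv_exp)
  then obtain n :: int where "\<i> * complex_of_real a = \<i> * complex_of_real b + of_int (2 * n) * pi * \<i>"
    using exp_eq by blast
  hence "Im (\<i> * complex_of_real a) = Im (\<i> * complex_of_real b + of_int (2 * n) * pi * \<i>)"
    by (rule arg_cong)
  hence "(a - b) / (2 * pi) = of_int n"
    by simp
  thus ?thesis by simp
qed

lemma continuous_Ints_valued_constant:
  fixes h :: "'a::topological_space \<Rightarrow> real"
  assumes "connected S" "continuous_on S h" "\<And>s. s \<in> S \<Longrightarrow> h s \<in> \<int>"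
  shows "h constant_on S"
proof (rule continuous_discrete_range_constant[OF assms(1,2)])
  fix x assume x: "x \<in> S"
  show "\<exists>e>0. \<forall>y. y \<in> S \<and> h y \<noteq> h x \<longrightarrow> e \<le> norm (h y - h x)"
  proof (intro exI[of _ 1] conjI allI impI)
    fix y assume y: "y \<in> S \<and> h y \<noteq> h x"
    then obtain m n where m: "h y = of_int m" and n: "h x = of_int n"
      using assms(3) x by (metis Ints_cases)
    with y have "1 \<le> \<bar>m - n\<bar>"
      by auto
    with m n show "1 \<le> norm (h y - h x)"
      by (simp flip: of_int_diff)
  qed simp
qed

lemma continuous_lifts_differ_by_constant:
  fixes \<theta> g :: "real \<Rightarrow> real"
  assumes "connected S" "continuous_on S \<theta>" "continuous_on S g"
    and "\<And>s. s \<in> S \<Longrightarrow> cis (\<theta> s) = cis (g s)" "a \<in> S" "b \<in> S"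
  shows "\<theta> b - g b = \<theta> a - g a"
proof -
  have "(\<lambda>s. (\<theta> s - g s) / (2 * pi)) constant_on S"
    using assms by (intro continuous_Ints_valued_constant continuous_intros cis_eq_cis_imp_Ints) auto
  with assms(5,6) have "(\<theta> b - g b) / (2 * pi) = (\<theta> a - g a) / (2 * pi)"
    unfolding constant_on_def by force
  thus ?thesis
    by simp
qed

lemma winding_num_eq_lift_increment:
  fixes f :: "real \<Rightarrow> complex" and r \<theta> :: "real \<Rightarrow> real"
  assumes L: "0 \<le> L" and \<theta>: "continuous_on {0..L} \<theta>"
    and r: "\<And>s. s \<in> {0..L} \<Longrightarrow> r s > 0"
    and polar: "\<And>s. s \<in> {0..L} \<Longrightarrow> f s = complex_of_real (r s) * cis (\<theta> s)"
  shows "winding_num f L = (\<theta> L - \<theta> 0) / (2 * pi)"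
proof -
  have norm_f: "cmod (f s) = r s" if "s \<in> {0..L}" for s
    using polar[OF that] r[OF that] by (simp add: norm_mult)
  have lift: "\<forall>s\<in>{0..L}. f s = complex_of_real (cmod (f s)) * cis (\<theta> s)"
    using polar norm_f by simp
  show ?thesis
    unfolding winding_num_def
  proof (rule the_equality)
    show "\<exists>\<phi>. continuous_on {0..L} \<phi> \<and> (\<forall>s\<in>{0..L}. f s = complex_of_real (cmod (f s)) * cis (\<phi> s))
          \<and> (\<theta> L - \<theta> 0) / (2 * pi) = (\<phi> L - \<phi> 0) / (2 * pi)"
      using \<theta> lift by blast
  next
    fix w
    assume "\<exists>\<phi>. continuous_on {0..L} \<phi> \<and> (\<forall>s\<in>{0..L}. f s = complex_of_real (cmod (f s)) * cis (\<phi> s))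
          \<and> w = (\<phi> L - \<phi> 0) / (2 * pi)"
    then obtain \<phi> where \<phi>: "continuous_on {0..L} \<phi>"
      and lift': "\<forall>s\<in>{0..L}. f s = complex_of_real (cmod (f s)) * cis (\<phi> s)"
      and w: "w = (\<phi> L - \<phi> 0) / (2 * pi)" by blast
    have "cis (\<phi> s) = cis (\<theta> s)" if "s \<in> {0..L}" for s
      using lift lift' that norm_f r by (metis mult_cancel_left of_real_eq_0_iff less_irrefl)
    hence "\<phi> L - \<theta> L = \<phi> 0 - \<theta> 0"
      using L by (intro continuous_lifts_differ_by_constant[OF _ \<phi> \<theta>]) auto
    thus "w = (\<theta> L - \<theta> 0) / (2 * pi)"
      unfolding w by (simp add: field_simps)
  qed
qed

lemma closed_curve_lift_increment_Ints:
  fixes f :: "real \<Rightarrow> complex" and r \<theta> :: "real \<Rightarrow> real"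
  assumes closed: "f L = f 0" and r: "r L > 0" "r 0 > 0"
    and polar: "\<And>s. s \<in> {0, L} \<Longrightarrow> f s = complex_of_real (r s) * cis (\<theta> s)"
  shows "(\<theta> L - \<theta> 0) / (2 * pi) \<in> \<int>"
proof -
  have "r L = r 0"
    using closed polar r by (metis insertI1 insertI2 norm_cis norm_mult norm_of_real abs_of_pos mult.right_neutral)
  with closed polar r have "cis (\<theta> L) = cis (\<theta> 0)"
    by (metis insertI1 insertI2 mult_cancel_left of_real_eq_0_iff less_irrefl)
  thus ?thesis by (rule cis_eq_cis_imp_Ints)
qed

theorem mainTheorem2:
  fixes L :: real
    and A :: "real \<Rightarrow> complex^2^2"
    and lam :: "nat \<Rightarrow> real \<Rightarrow> real"
    and u :: "nat \<Rightarrow> real \<Rightarrow> complex^2"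
    and \<gamma> :: "nat \<Rightarrow> real \<Rightarrow> real"
    and lamt :: "nat \<Rightarrow> real \<Rightarrow> complex"
    and \<psi> :: "nat \<Rightarrow> complex \<Rightarrow> real \<Rightarrow> (complex^2) \<times> (complex^2)"
    and Zak :: "nat \<Rightarrow> complex \<Rightarrow> complex"
  assumes L_pos: "L > 0"
    and A_C1: "A C1_differentiable_on UNIV"
    and A_per: "\<forall>s. A (s + L) = A s"
    and A_sym: "\<forall>s. transpose (A s) = A s"
    and lam_pos: "\<forall>s. lam 1 s > lam 2 s \<and> lam 2 s > 0"
    and AA_eigs: "\<forall>s. \<forall>\<mu>. (\<exists>v. v \<noteq> 0 \<and> (A s ** cadj (A s)) *v v = \<mu> *s v)
                       \<longleftrightarrow> (\<mu> = complex_of_real ((lam 1 s)\<^sup>2) \<or> \<mu> = complex_of_real ((lam 2 s)\<^sup>2))"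
    and u_C1: "\<forall>j\<in>{1,2}. u j C1_differentiable_on UNIV"
    and u_per: "\<forall>j\<in>{1,2}. \<forall>s. u j (s + L) = u j s"
    and u_orth: "\<forall>j\<in>{1,2}. \<forall>k\<in>{1,2}. \<forall>s. cinner (u j s) (u k s) = (if j = k then 1 else 0)"
    and u_eig: "\<forall>j\<in>{1,2}. \<forall>s. (A s ** cadj (A s)) *v u j s = complex_of_real ((lam j s)\<^sup>2) *s u j s"
    and lamt_def: "\<forall>j\<in>{1,2}. \<forall>s. lamt j s = tdot (u j s) (cadj (A s) *v u j s)"
    and \<gamma>_C1: "\<forall>j\<in>{1,2}. \<gamma> j C1_differentiable_on UNIV"
    and \<gamma>_phase: "\<forall>j\<in>{1,2}. \<forall>s. lamt j s = complex_of_real (lam j s) * exp (\<i> * complex_of_real (\<gamma> j s))"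
    and \<psi>_def: "\<forall>j\<in>{1,2}. \<forall>\<sigma>\<in>{1,-1}. \<forall>s. \<psi> j \<sigma> s =
        (complex_of_real (1 / sqrt 2) *s (\<sigma> * exp (- \<i> * complex_of_real (\<gamma> j s)) *s u j s),
         complex_of_real (1 / sqrt 2) *s vconj (u j s))"
    and Zak_def: "\<forall>j\<in>{1,2}. \<forall>\<sigma>\<in>{1,-1}. Zak j \<sigma> =
        \<i> * integral {0..L} (\<lambda>s. cinner4 (\<psi> j \<sigma> s) (vector_derivative (\<psi> j \<sigma>) (at s)))"
  shows "\<forall>j\<in>{1,2}. \<forall>\<sigma>\<in>{1,-1}.
           Zak j \<sigma> = complex_of_real ((\<gamma> j L - \<gamma> j 0) / 2)
         \<and> Zak j \<sigma> = complex_of_real (pi * winding_num (lamt j) L)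
         \<and> winding_num (lamt j) L \<in> \<int>"
proof (intro ballI)
  fix j :: nat and \<sigma> :: complex
  assume j: "j \<in> {1,2}" and \<sigma>: "\<sigma> \<in> {1,-1}"
  have lam_j_pos: "lam j s > 0" for s
    using lam_pos j by (metis empty_iff insert_iff order.strict_trans)
  have polar: "lamt j s = complex_of_real (lam j s) * cis (\<gamma> j s)" for s
    using \<gamma>_phase[rule_format, OF j] by (simp add: cis_conv_exp)
  have \<gamma>_cont: "continuous_on {0..L} (\<gamma> j)"
    using \<gamma>_C1 j C1_differentiable_imp_continuous_on continuous_on_subset by blast
  have "Zak j \<sigma> = complex_of_real ((\<gamma> j L - \<gamma> j 0) / 2)"
    unfolding Zak_def[rule_format, OF j \<sigma>]
  proof (rule zak_phase_doubled_state)
    show "cinner (u j s) (u j s) = 1" for s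
      using u_orth[rule_format, OF j j] by simp
    show "cmod \<sigma> = 1"
      using \<sigma> by auto
  qed (use u_C1 \<gamma>_C1 \<psi>_def j \<sigma> L_pos in auto)
  moreover have "winding_num (lamt j) L = (\<gamma> j L - \<gamma> j 0) / (2 * pi)"
    using L_pos \<gamma>_cont lam_j_pos polar by (intro winding_num_eq_lift_increment) auto
  moreover have "lamt j L = lamt j 0"
    using lamt_def u_per A_per j by (metis add_0)
  hence "(\<gamma> j L - \<gamma> j 0) / (2 * pi) \<in> \<int>"
    using lam_j_pos polar by (intro closed_curve_lift_increment_Ints) auto
  ultimately show "Zak j \<sigma> = complex_of_real ((\<gamma> j L - \<gamma> j 0) / 2)
         \<and> Zak j \<sigma> = complex_of_real (pi * winding_num (lamt j) L)
         \<and> winding_num (lamt j) L \<in> \<int>"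
    by simp
qed

end
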